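(* Let $x<y$ be real numbers and let $\alpha\in(0,1)$. Let $f:[x,y]\to\mathbb{R}$ be a convex function and let $F:[x,y]\to\mathbb{R}$ be such that $F'=f$. Define $$S^1_\alpha f(x,y):=\frac{-\frac{\alpha}{1-\alpha}F(x)+\frac{2\alpha-1}{\alpha(1-\alpha)}F(\alpha x+(1-\alpha)y)+\frac{1-\alpha}{\alpha}F(y)}{y-x}.$$ Then $$f(\alpha x+(1-\alpha)y)\leq S^1_\alpha f(x,y)\leq\alpha f(x)+(1-\alpha)f(y).$$ *)

theory Defs
  imports "HOL-Analysis.Analysis"
begin

definition S1 :: "real \<Rightarrow> (real \<Rightarrow> real) \<Rightarrow> real \<Rightarrow> real \<Rightarrow> real" where
  "S1 \<alpha> F x y =
     (- (\<alpha> / (1 - \<alpha>)) * F x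
      + ((2 * \<alpha> - 1) / (\<alpha> * (1 - \<alpha>))) * F (\<alpha> * x + (1 - \<alpha>) * y)
      + ((1 - \<alpha>) / \<alpha>) * F y) / (y - x)"

end

theory Submission
  imports Defs
begin

text \<open>With \<open>z = \<alpha> x + (1 - \<alpha>) y\<close>, \<open>S1 \<alpha> F x y\<close> is the \<open>(\<alpha>, 1 - \<alpha>)\<close>-combination of the mean
  values of \<open>f\<close> on \<open>[x, z]\<close> and \<open>[z, y]\<close>, and both bounds follow from the Hermite--Hadamard
  inequality \<open>f ((a + b) / 2) \<le> (F b - F a) / (b - a) \<le> (f a + f b) / 2\<close> on these two pieces.
  For the lower bound, the same weights applied to the midpoints \<open>(x + z) / 2\<close> and \<open>(z + y) / 2\<close>
  give back \<open>z\<close>; for the upper bound, the resulting \<open>(\<alpha> f x + (1 - \<alpha>) f y + f z) / 2\<close> is at most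
  \<open>\<alpha> f x + (1 - \<alpha>) f y\<close> by convexity. Hermite--Hadamard needs no integration theory: each half
  says that a suitable combination of \<open>F\<close> with elementary functions has a nonnegative derivative.\<close>

lemma le_if_has_real_derivative_nonneg:
  fixes G g :: "real \<Rightarrow> real"
  assumes "a \<le> b"
    and "\<And>t. t \<in> {a..b} \<Longrightarrow> (G has_real_derivative g t) (at t within {a..b})"
    and "\<And>t. t \<in> {a..b} \<Longrightarrow> 0 \<le> g t"
  shows "G a \<le> G b"
proof -
  obtain t where t: "t \<in> {a..b}" and mvt: "G b - G a = g t * (b - a)"
    using mvt_very_simple[of a b G "\<lambda>t. (*) (g t)"] assms(1,2)
    by (auto simp: has_field_derivative_def)
  have "0 \<le> g t * (b - a)"
    using assms(1) assms(3)[OF t] by simp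
  with mvt show ?thesis
    by simp
qed

lemma has_real_derivative_reflect_interval:
  fixes F f :: "real \<Rightarrow> real"
  assumes "\<And>t. t \<in> {a..b} \<Longrightarrow> (F has_real_derivative f t) (at t within {a..b})"
    and "t \<in> {a..b}"
  shows "((\<lambda>s. F (a + b - s)) has_real_derivative - f (a + b - t)) (at t within {a..b})"
proof -
  have reflect: "((\<lambda>s. a + b - s) has_real_derivative - 1) (at t within {a..b})"
    by (auto intro!: derivative_eq_intros)
  have "(\<lambda>s. a + b - s) ` {a..b} \<subseteq> {a..b}"
    by auto
  moreover have "a + b - t \<in> {a..b}"
    using assms(2) by auto
  ultimately have "(F has_real_derivative f (a + b - t)) (at (a + b - t) within (\<lambda>s. a + b - s) ` {a..b})"
    using assms(1) by (blast intro: has_field_derivative_subset)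
  from DERIV_image_chain[OF this reflect] show ?thesis
    by (simp add: o_def)
qed

lemma convex_on_midpoint_le_mean_value:
  fixes f F :: "real \<Rightarrow> real"
  assumes "a < b" and "convex_on {a..b} f"
    and F: "\<And>t. t \<in> {a..b} \<Longrightarrow> (F has_real_derivative f t) (at t within {a..b})"
  shows "f ((a + b) / 2) \<le> (F b - F a) / (b - a)"
proof -
  define m where "m = (a + b) / 2"
  define G where "G t = F t - F (a + b - t) - 2 * f m * t" for t
  have sub: "{m..b} \<subseteq> {a..b}"
    using assms(1) by (auto simp: m_def)
  have "G m \<le> G b"
  proof (rule le_if_has_real_derivative_nonneg[of m b G "\<lambda>t. f t + f (a + b - t) - 2 * f m"])
    fix t assume t: "t \<in> {m..b}"
    then have t': "t \<in> {a..b}"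
      using sub by blast
    have "(G has_real_derivative f t - - f (a + b - t) - 2 * f m * 1) (at t within {a..b})"
      unfolding G_def
      by (intro DERIV_diff DERIV_cmult DERIV_ident F t' has_real_derivative_reflect_interval[OF F])
    from has_field_derivative_subset[OF this sub]
    show "(G has_real_derivative f t + f (a + b - t) - 2 * f m) (at t within {m..b})"
      by simp
    have "f ((1 - 1/2) * t + (1/2) * (a + b - t)) \<le> (1 - 1/2) * f t + (1/2) * f (a + b - t)"
      using convex_onD[OF assms(2), of "1/2" t "a + b - t"] t' by simp
    moreover have "(1 - 1/2) * t + (1/2) * (a + b - t) = m"
      by (simp add: m_def field_simps)
    ultimately show "0 \<le> f t + f (a + b - t) - 2 * f m"
      by simp
  qed (use assms(1) in \<open>simp add: m_def\<close>)
  moreover have "G b - G m = F b - F a - (b - a) * f m"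
  proof -
    have reflect_m: "a + b - m = m"
      by (simp add: m_def field_simps)
    have "G m = - 2 * f m * m"
      unfolding G_def reflect_m by simp
    moreover have "G b = F b - F a - 2 * f m * b"
      by (simp add: G_def)
    ultimately have "G b - G m = F b - F a - 2 * (b - m) * f m"
      by (simp add: algebra_simps)
    also have "2 * (b - m) = b - a"
      by (simp add: m_def field_simps)
    finally show ?thesis .
  qed
  ultimately show ?thesis
    using assms(1) by (simp add: m_def pos_le_divide_eq mult.commute)
qed

lemma convex_on_mean_value_le_average_endpoints:
  fixes f F :: "real \<Rightarrow> real"
  assumes "a < b" and "convex_on {a..b} f"
    and F: "\<And>t. t \<in> {a..b} \<Longrightarrow> (F has_real_derivative f t) (at t within {a..b})"
  shows "(F b - F a) / (b - a) \<le> (f a + f b) / 2"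
proof -
  define k where "k = (f b - f a) / (b - a)"
  \<comment> \<open>\<open>L\<close> is an antiderivative of the chord \<open>t \<mapsto> f a + k (t - a)\<close> of \<open>f\<close>, which lies above \<open>f\<close>\<close>
  define L where "L t = f a * t + k * (t - a)^2 / 2" for t
  have "L a - F a \<le> L b - F b"
  proof (rule le_if_has_real_derivative_nonneg[of a b "\<lambda>t. L t - F t" "\<lambda>t. f a + k * (t - a) - f t"])
    fix t assume t: "t \<in> {a..b}"
    have "(L has_real_derivative f a + k * (t - a)) (at t within {a..b})"
      unfolding L_def by (auto intro!: derivative_eq_intros)
    then show "((\<lambda>t. L t - F t) has_real_derivative f a + k * (t - a) - f t) (at t within {a..b})"
      using F[OF t] by (rule DERIV_diff)
    show "0 \<le> f a + k * (t - a) - f t"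
      using convex_onD_Icc'[OF assms(2) t] by (simp add: k_def)
  qed (use assms(1) in simp)
  then have "F b - F a \<le> L b - L a"
    by simp
  also have "\<dots> = f a * (b - a) + k * (b - a) * (b - a) / 2"
    by (simp add: L_def power2_eq_square algebra_simps)
  also have "k * (b - a) = f b - f a"
    using assms(1) by (simp add: k_def)
  also have "f a * (b - a) + (f b - f a) * (b - a) / 2 = (b - a) * ((f a + f b) / 2)"
    by (simp add: field_simps)
  finally show ?thesis
    using assms(1) by (simp add: pos_divide_le_eq mult.commute)
qed

lemma S1_eq_combination_of_mean_values:
  fixes F :: "real \<Rightarrow> real"
  assumes "x < y" and "0 < \<alpha>" and "\<alpha> < 1"
  defines "z \<equiv> \<alpha> * x + (1 - \<alpha>) * y"
  shows "S1 \<alpha> F x y = \<alpha> * ((F z - F x) / (z - x)) + (1 - \<alpha>) * ((F y - F z) / (y - z))"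
proof -
  have weight: "(2 * \<alpha> - 1) / (\<alpha> * (1 - \<alpha>)) = \<alpha> / (1 - \<alpha>) - (1 - \<alpha>) / \<alpha>"
    using assms(2,3) by (simp add: field_simps)
  have S1_eq: "S1 \<alpha> F x y = (\<alpha> / (1 - \<alpha>) * (F z - F x) + (1 - \<alpha>) / \<alpha> * (F y - F z)) / (y - x)"
    unfolding S1_def z_def[symmetric] weight by (simp add: algebra_simps flip: add_divide_distrib)
  have zx: "z - x = (1 - \<alpha>) * (y - x)" and yz: "y - z = \<alpha> * (y - x)"
    by (simp_all add: z_def algebra_simps)
  have "(\<alpha> / (1 - \<alpha>) * A + (1 - \<alpha>) / \<alpha> * B) / h
      = \<alpha> * (A / ((1 - \<alpha>) * h)) + (1 - \<alpha>) * (B / (\<alpha> * h))" for A B h :: real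
    using assms(2,3) by (cases "h = 0") (simp_all add: field_simps)
  then show ?thesis
    unfolding S1_eq zx yz .
qed

theorem proposition2:
  fixes x y \<alpha> :: real and f F :: "real \<Rightarrow> real"
  assumes "x < y"
    and "0 < \<alpha>" and "\<alpha> < 1"
    and "convex_on {x..y} f"
    and "\<And>t. t \<in> {x..y} \<Longrightarrow> (F has_real_derivative f t) (at t within {x..y})"
  shows "f (\<alpha> * x + (1 - \<alpha>) * y) \<le> S1 \<alpha> F x y \<and>
         S1 \<alpha> F x y \<le> \<alpha> * f x + (1 - \<alpha>) * f y"
proof -
  define z where "z = \<alpha> * x + (1 - \<alpha>) * y"
  have "z - x = (1 - \<alpha>) * (y - x)" "y - z = \<alpha> * (y - x)"
    by (simp_all add: z_def algebra_simps)
  then have xz: "x < z" and zy: "z < y"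
    using assms(1-3) by (metis diff_gt_0_iff_gt mult_pos_pos)+
  have convex: "convex_on {a..b} f"
    and F: "\<And>t. t \<in> {a..b} \<Longrightarrow> (F has_real_derivative f t) (at t within {a..b})"
    if "x \<le> a" "b \<le> y" for a b
    using that convex_on_subset[OF assms(4)] has_field_derivative_subset[OF assms(5)] by auto
  note S = S1_eq_combination_of_mean_values[OF assms(1-3), of F, folded z_def]
  have "z = \<alpha> * ((x + z) / 2) + (1 - \<alpha>) * ((z + y) / 2)"
    by (simp add: z_def field_simps)
  also have "f \<dots> \<le> \<alpha> * f ((x + z) / 2) + (1 - \<alpha>) * f ((z + y) / 2)"
    using convex_onD[OF assms(4), of "1 - \<alpha>" "(x + z) / 2" "(z + y) / 2"] assms(2,3) xz zy
    by simp
  also have "\<dots> \<le> S1 \<alpha> F x y"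
    unfolding S using assms(2,3) xz zy
    by (intro add_mono mult_left_mono convex_on_midpoint_le_mean_value convex F) auto
  finally have lower: "f z \<le> S1 \<alpha> F x y" .
  have "S1 \<alpha> F x y \<le> \<alpha> * ((f x + f z) / 2) + (1 - \<alpha>) * ((f z + f y) / 2)"
    unfolding S using assms(2,3) xz zy
    by (intro add_mono mult_left_mono convex_on_mean_value_le_average_endpoints convex F) auto
  also have "\<dots> \<le> \<alpha> * f x + (1 - \<alpha>) * f y"
    using convex_onD[OF assms(4), of "1 - \<alpha>" x y] assms(1-3) by (simp add: z_def field_simps)
  finally show ?thesis
    using lower by (simp add: z_def)
qed

end
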